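(* Every connected graph $G$ with at least $2$ vertices has a connecting transition set of size $\tau(G)$, where $$\tau(G)=\sum_{C}\begin{cases}|C|-2 & \text{if } G[C] \text{ is connected},\\ |C|-1 & \text{otherwise},\end{cases}$$ the sum ranging over all co-connected components $C$ of $G$ with $|C|\ge 2$.
   Context: All graphs are finite, simple and undirected. $G[X]$ denotes the subgraph induced by $X\subseteq V(G)$. The complement $\bar G$ of $G$ has vertex set $V(G)$ and an edge $xy$ ($x\ne y$) iff $xy\notin E(G)$. A co-connected component of $G$ is (the vertex set of) a connected component of $\bar G$. A transition of a graph $G$ is an unordered pair $\{ab,bc\}$ of two distinct edges of $G$ sharing the vertex $b$ (so $a\neq c$); it is written $abc$. A walk in $G$ is a sequence $(v_1,\dots,v_k)$ of vertices with $v_iv_{i+1}\in E(G)$ for all $i\le k-1$; it leads from $v_1$ to $v_k$. For a set $T$ of transitions of $G$, a walk $(v_1,\dots,v_k)$ is $T$-compatible if for every $i\in[1,k-2]$, either $v_i=v_{i+2}$ or $v_iv_{i+1}v_{i+2}\in T$. The graph $G$ is $T$-connected, and $T$ is a connecting transition set of $G$, if for all vertices $u,v$ of $G$ there is a $T$-compatible walk leading from $u$ to $v$. *)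

theory Defs
  imports Main
begin

definition simple_graph :: "'a set \<Rightarrow> 'a set set \<Rightarrow> bool" where
  "simple_graph V E \<longleftrightarrow> finite V \<and>
     (\<forall>e\<in>E. \<exists>a b. e = {a, b} \<and> a \<noteq> b \<and> a \<in> V \<and> b \<in> V)"

definition adj :: "'a set set \<Rightarrow> 'a \<Rightarrow> 'a \<Rightarrow> bool" where
  "adj E x y \<longleftrightarrow> {x, y} \<in> E"

definition coadj :: "'a set set \<Rightarrow> 'a \<Rightarrow> 'a \<Rightarrow> bool" where
  "coadj E x y \<longleftrightarrow> x \<noteq> y \<and> {x, y} \<notin> E"

definition reach_in :: "'a set \<Rightarrow> ('a \<Rightarrow> 'a \<Rightarrow> bool) \<Rightarrow> ('a \<times> 'a) set" where
  "reach_in S R = {(x, y). x \<in> S \<and> y \<in> S \<and> R x y}\<^sup>*"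

definition connected_on :: "'a set \<Rightarrow> ('a \<Rightarrow> 'a \<Rightarrow> bool) \<Rightarrow> bool" where
  "connected_on S R \<longleftrightarrow> S \<noteq> {} \<and> (\<forall>x\<in>S. \<forall>y\<in>S. (x, y) \<in> reach_in S R)"

definition component :: "'a set \<Rightarrow> ('a \<Rightarrow> 'a \<Rightarrow> bool) \<Rightarrow> 'a \<Rightarrow> 'a set" where
  "component S R x = {y \<in> S. (x, y) \<in> reach_in S R}"

definition co_components :: "'a set \<Rightarrow> 'a set set \<Rightarrow> 'a set set" where
  "co_components V E = component V (coadj E) ` V"

definition tau :: "'a set \<Rightarrow> 'a set set \<Rightarrow> nat" where
  "tau V E = (\<Sum>C\<in>{C \<in> co_components V E. card C \<ge> 2}.
      (if connected_on C (adj E) then card C - 2 else card C - 1))"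

definition transitions :: "'a set set \<Rightarrow> 'a set set set" where
  "transitions E = {{{a, b}, {b, c}} | a b c. {a, b} \<in> E \<and> {b, c} \<in> E \<and> a \<noteq> c}"

definition is_walk :: "'a set set \<Rightarrow> 'a list \<Rightarrow> bool" where
  "is_walk E w \<longleftrightarrow> w \<noteq> [] \<and> (\<forall>i. Suc i < length w \<longrightarrow> {w ! i, w ! Suc i} \<in> E)"

definition T_compatible :: "'a set set set \<Rightarrow> 'a list \<Rightarrow> bool" where
  "T_compatible T w \<longleftrightarrow> (\<forall>i. i + 2 < length w \<longrightarrow>
      w ! i = w ! (i + 2) \<or> {{w ! i, w ! (i + 1)}, {w ! (i + 1), w ! (i + 2)}} \<in> T)"

definition T_connected :: "'a set \<Rightarrow> 'a set set \<Rightarrow> 'a set set set \<Rightarrow> bool" where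
  "T_connected V E T \<longleftrightarrow> (\<forall>u\<in>V. \<forall>v\<in>V. \<exists>w. is_walk E w \<and> T_compatible T w \<and>
      hd w = u \<and> last w = v)"

definition connecting_transition_set :: "'a set \<Rightarrow> 'a set set \<Rightarrow> 'a set set set \<Rightarrow> bool" where
  "connecting_transition_set V E T \<longleftrightarrow> T \<subseteq> transitions E \<and> T_connected V E T"

end

theory Submission
  imports Defs
begin

text \<open>
  Two vertices in different co-connected components are adjacent, so walks are only needed
  inside a co-connected component C with at least two vertices. For each such C we construct
  a set of transitions whose ends lie in C (hence the sets for different components are
  disjoint), together with a hub arc h: every vertex of C has a T-compatible walk to h and
  one back from h. If G[C] is connected, grow C from a single edge one vertex at a time;
  attaching v to u costs only the transition q u v, where q is the neighbour u uses to reach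
  the hub. Otherwise some x outside C is adjacent to all of C (since G is connected), and
  the |C| - 1 transitions c x y for a fixed c \<in> C form a star through the hub arc (x, c).
\<close>

text \<open>
  Arcs are ordered pairs of vertices. \<open>arc_reach E T (p, q) (r, s)\<close> says that the walk p q can be
  continued to a T-compatible walk ending with r s; turning back along the same edge is free.
\<close>

fun arc_step :: "'a set set \<Rightarrow> 'a set set set \<Rightarrow> 'a \<times> 'a \<Rightarrow> 'a \<times> 'a \<Rightarrow> bool" where
  "arc_step E T (r, s) (s', t) \<longleftrightarrow> s' = s \<and> {s, t} \<in> E \<and> (r = t \<or> {{r, s}, {s, t}} \<in> T)"

abbreviation arc_reach :: "'a set set \<Rightarrow> 'a set set set \<Rightarrow> 'a \<times> 'a \<Rightarrow> 'a \<times> 'a \<Rightarrow> bool" where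
  "arc_reach E T \<equiv> (arc_step E T)\<^sup>*\<^sup>*"

lemma is_walk_snoc:
  assumes "is_walk E (w @ [s])" "{s, t} \<in> E"
  shows "is_walk E (w @ [s, t])"
  using assms unfolding is_walk_def
  by (auto simp: nth_append less_Suc_eq nth_Cons split: nat.splits)

lemma T_compatible_snoc:
  assumes "T_compatible T (w @ [r, s])" "r = t \<or> {{r, s}, {s, t}} \<in> T"
  shows "T_compatible T (w @ [r, s, t])"
  using assms unfolding T_compatible_def
  by (auto simp: nth_append less_Suc_eq nth_Cons split: nat.splits)

lemma arc_step_mono: "T \<subseteq> T' \<Longrightarrow> arc_step E T \<le> arc_step E T'"
  by auto

lemma arc_reach_mono: "arc_reach E T a b \<Longrightarrow> T \<subseteq> T' \<Longrightarrow> arc_reach E T' a b"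
  by (metis arc_step_mono rtranclp_mono predicate2D)

lemma arc_reach_walk:
  assumes "arc_reach E T (p, q) (r, s)" "{p, q} \<in> E"
  shows "\<exists>w. is_walk E (w @ [r, s]) \<and> T_compatible T (w @ [r, s]) \<and> hd (w @ [r, s]) = p"
  using assms(1)
proof (induction rule: rtranclp_induct2)
  case refl
  show ?case
    using assms(2) by (intro exI[of _ "[]"]) (auto simp: is_walk_def T_compatible_def less_Suc_eq)
next
  case (step r s s' t)
  then obtain w where w: "is_walk E (w @ [r, s])" "T_compatible T (w @ [r, s])" "hd (w @ [r, s]) = p"
    by blast
  from step(2) have "s' = s" and st: "{s, t} \<in> E" and rst: "r = t \<or> {{r, s}, {s, t}} \<in> T"
    by auto
  have "is_walk E (w @ [r, s, t])"
    using is_walk_snoc[of E "w @ [r]", OF _ st] w(1) by simp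
  moreover have "T_compatible T (w @ [r, s, t])"
    using w(2) rst by (rule T_compatible_snoc)
  moreover have "hd (w @ [r, s, t]) = p"
    using w(3) by (cases w) auto
  ultimately show ?case
    using \<open>s' = s\<close> by (intro exI[of _ "w @ [r]"]) simp
qed

definition hub :: "'a set set \<Rightarrow> 'a set set set \<Rightarrow> 'a \<times> 'a \<Rightarrow> 'a set \<Rightarrow> 'a set \<Rightarrow> bool" where
  "hub E T h A B \<longleftrightarrow>
     (\<forall>y\<in>A. \<exists>q\<in>B. {y, q} \<in> E \<and> arc_reach E T (y, q) h \<and> arc_reach E T h (q, y))"

lemma hub_mono: "hub E T h A B \<Longrightarrow> T \<subseteq> T' \<Longrightarrow> B \<subseteq> B' \<Longrightarrow> hub E T' h A B'"
  unfolding hub_def by (meson arc_reach_mono subsetD)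

lemma hub_walk:
  assumes "hub E T h A B" "x \<in> A" "y \<in> A"
  shows "\<exists>w. is_walk E w \<and> T_compatible T w \<and> hd w = x \<and> last w = y"
proof -
  obtain qx qy where "{x, qx} \<in> E" "arc_reach E T (x, qx) h" "arc_reach E T h (qy, y)"
    using assms unfolding hub_def by meson
  then have "arc_reach E T (x, qx) (qy, y)" and "{x, qx} \<in> E"
    by auto
  from arc_reach_walk[OF this] obtain w where
    "is_walk E (w @ [qy, y])" "T_compatible T (w @ [qy, y])" "hd (w @ [qy, y]) = x"
    by blast
  then show ?thesis
    by (intro exI[of _ "w @ [qy, y]"]) simp
qed

lemma hub_edge:
  assumes "{x, v} \<in> E"
  shows "hub E T (x, v) {x, v} {x, v}"
proof -
  have "{v, x} \<in> E"
    using assms by (simp add: insert_commute)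
  then show ?thesis
    using assms unfolding hub_def by auto
qed

lemma hub_insert_vertex:
  assumes hub: "hub E T h S S" and "u \<in> S" and uv: "{u, v} \<in> E"
  obtains q where "q \<in> S" "{q, u} \<in> E"
    "hub E (insert {{q, u}, {u, v}} T) h (insert v S) (insert v S)"
proof -
  obtain q where q: "q \<in> S" "{u, q} \<in> E" "arc_reach E T (u, q) h" "arc_reach E T h (q, u)"
    using hub \<open>u \<in> S\<close> unfolding hub_def by blast
  define T' where "T' = insert {{q, u}, {u, v}} T"
  have "arc_step E T' (v, u) (u, q)"
    using q(2) by (simp add: T'_def insert_commute)
  moreover have "arc_reach E T' (u, q) h"
    using arc_reach_mono[OF q(3)] by (auto simp: T'_def)
  ultimately have to_hub: "arc_reach E T' (v, u) h"
    by (rule converse_rtranclp_into_rtranclp)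
  have "arc_reach E T' h (q, u)"
    using arc_reach_mono[OF q(4)] by (auto simp: T'_def)
  moreover have "arc_step E T' (q, u) (u, v)"
    using uv by (simp add: T'_def)
  ultimately have from_hub: "arc_reach E T' h (u, v)"
    by (rule rtranclp.rtrancl_into_rtrancl)
  have "hub E T' h (insert v S) (insert v S)"
    unfolding hub_def
  proof
    fix y assume "y \<in> insert v S"
    then show "\<exists>q\<in>insert v S. {y, q} \<in> E \<and> arc_reach E T' (y, q) h \<and> arc_reach E T' h (q, y)"
    proof
      assume "y = v"
      then show ?thesis
        using to_hub from_hub uv \<open>u \<in> S\<close> by (auto simp: insert_commute)
    next
      assume "y \<in> S"
      then show ?thesis
        using hub_mono[OF hub, of T' "insert v S"] unfolding hub_def T'_def by blast
    qed
  qed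
  then show thesis
    using q(1,2) that by (simp add: T'_def insert_commute)
qed

lemma reach_in_leaves:
  assumes "(x, y) \<in> reach_in S R" "x \<in> A" "y \<notin> A"
  shows "\<exists>u\<in>A. \<exists>v\<in>S - A. R u v"
proof -
  have "y \<notin> A \<longrightarrow> (\<exists>u\<in>A. \<exists>v\<in>S - A. R u v)"
    using assms(1) unfolding reach_in_def
    by (induction rule: rtrancl_induct) (use assms(2) in auto)
  with assms(3) show ?thesis
    by blast
qed

lemma connected_on_edge_leaving:
  assumes "connected_on S (adj E)" "x \<in> A" "A \<subseteq> S" "y \<in> S - A"
  obtains u v where "u \<in> A" "v \<in> S - A" "{u, v} \<in> E"
  using assms reach_in_leaves[of x y S "adj E" A] unfolding connected_on_def adj_def
  by blast

lemma connected_subset_hub_transitions: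
  assumes conn: "connected_on S (adj E)" and "finite S" "2 \<le> n" "n \<le> card S"
  shows "\<exists>S' T h. S' \<subseteq> S \<and> card S' = n \<and> T \<subseteq> transitions E \<and> \<Union>(\<Union>T) \<subseteq> S' \<and>
    finite T \<and> card T = n - 2 \<and> hub E T h S' S'"
  using assms(3,4)
proof (induction n rule: dec_induct)
  case base
  obtain x where x: "x \<in> S"
    using conn unfolding connected_on_def by blast
  have "S \<noteq> {x}"
    using base by auto
  with x obtain y where "y \<in> S - {x}"
    by blast
  with x obtain v where "v \<in> S - {x}" "{x, v} \<in> E"
    using connected_on_edge_leaving[OF conn, of x "{x}" y] by blast
  then show ?case
    using x hub_edge[of x v E "{}"]
    by (intro exI[of _ "{x, v}"] exI[of _ "{}"]) auto
next
  case (step m)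
  then obtain S' T h where S': "S' \<subseteq> S" "card S' = m" "T \<subseteq> transitions E" "\<Union>(\<Union>T) \<subseteq> S'"
    "finite T" "card T = m - 2" "hub E T h S' S'"
    by auto
  have "S' \<noteq> {}" "S' \<noteq> S"
    using S'(2) step by auto
  then obtain x y where "x \<in> S'" "y \<in> S - S'"
    using S'(1) by blast
  with S'(1) obtain u v where uv: "u \<in> S'" "v \<in> S - S'" "{u, v} \<in> E"
    using connected_on_edge_leaving[OF conn] by metis
  obtain q where q: "q \<in> S'" "{q, u} \<in> E"
    and hub: "hub E (insert {{q, u}, {u, v}} T) h (insert v S') (insert v S')"
    using hub_insert_vertex[OF S'(7) uv(1,3)] by blast
  define t where "t = {{q, u}, {u, v}}"
  have "q \<noteq> v"
    using q(1) uv(2) by auto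
  then have "t \<in> transitions E"
    unfolding t_def transitions_def using q(2) uv(3) by blast
  moreover have "t \<notin> T"
    using S'(4) uv(2) unfolding t_def by blast
  moreover have "\<Union>(\<Union>(insert t T)) \<subseteq> insert v S'"
    using S'(4) q(1) uv(1) unfolding t_def by auto
  moreover have "card (insert v S') = Suc m"
    using S' uv(2) \<open>finite S\<close> by (simp add: finite_subset)
  ultimately show ?case
    using S' uv(2) hub step(1) unfolding t_def[symmetric]
    by (intro exI[of _ "insert v S'"] exI[of _ "insert t T"] exI[of _ h]) auto
qed

lemma connected_hub_transitions:
  assumes "connected_on S (adj E)" "finite S" "2 \<le> card S"
  shows "\<exists>T h. T \<subseteq> transitions E \<and> \<Union>(\<Union>T) \<subseteq> S \<and> finite T \<and> card T = card S - 2 \<and>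
    hub E T h S S"
proof -
  obtain S' T h where "S' \<subseteq> S" "card S' = card S" "T \<subseteq> transitions E" "\<Union>(\<Union>T) \<subseteq> S'"
    "finite T" "card T = card S - 2" "hub E T h S' S'"
    using connected_subset_hub_transitions[OF assms order_refl] by blast
  moreover from this have "S' = S"
    using card_subset_eq[OF \<open>finite S\<close>] by blast
  ultimately show ?thesis
    by blast
qed

lemma star_hub_transitions:
  assumes "finite C" "c \<in> C" "x \<notin> C" and x_adj: "\<And>y. y \<in> C \<Longrightarrow> {x, y} \<in> E"
  shows "\<exists>T. T \<subseteq> transitions E \<and> (\<forall>t\<in>T. \<Union>t - \<Inter>t \<subseteq> C) \<and> finite T \<and>
    card T = card C - 1 \<and> hub E T (x, c) C {x}"
proof -
  have adj_x: "{y, x} \<in> E" if "y \<in> C" for y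
    using x_adj[OF that] by (simp add: insert_commute)
  define T where "T = (\<lambda>y. {{c, x}, {x, y}}) ` (C - {c})"
  have "inj_on (\<lambda>y. {{c, x}, {x, y}}) (C - {c})"
    using \<open>x \<notin> C\<close> by (intro inj_onI) (auto simp: doubleton_eq_iff)
  then have "card T = card C - 1"
    unfolding T_def using \<open>finite C\<close> \<open>c \<in> C\<close> by (simp add: card_image)
  moreover have "T \<subseteq> transitions E"
    unfolding T_def transitions_def using x_adj adj_x \<open>c \<in> C\<close> by blast
  moreover have "\<forall>t\<in>T. \<Union>t - \<Inter>t \<subseteq> C"
    unfolding T_def using \<open>x \<notin> C\<close> \<open>c \<in> C\<close> by auto
  moreover have "hub E T (x, c) C {x}"
    unfolding hub_def
  proof (intro ballI bexI conjI)
    fix y assume "y \<in> C"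
    have "c = y \<or> {{c, x}, {x, y}} \<in> T"
      unfolding T_def using \<open>y \<in> C\<close> by blast
    moreover have "{{y, x}, {x, c}} = {{c, x}, {x, y}}"
      by (simp add: insert_commute)
    ultimately have to_hub: "arc_step E T (y, x) (x, c)" and turn: "arc_step E T (c, x) (x, y)"
      using x_adj \<open>c \<in> C\<close> \<open>y \<in> C\<close> by auto
    have "arc_step E T (x, c) (c, x)"
      using adj_x \<open>c \<in> C\<close> by simp
    then show "arc_reach E T (x, c) (x, y)"
      using turn by (rule rtranclp.rtrancl_into_rtrancl[OF r_into_rtranclp])
    show "arc_reach E T (y, x) (x, c)"
      using to_hub ..
    show "{y, x} \<in> E"
      using adj_x \<open>y \<in> C\<close> .
  qed simp
  ultimately show ?thesis
    unfolding T_def using \<open>finite C\<close> by blast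
qed

lemma component_subset: "component S R x \<subseteq> S"
  unfolding component_def by blast

lemma component_refl: "x \<in> S \<Longrightarrow> x \<in> component S R x"
  unfolding component_def reach_in_def by simp

lemma component_step:
  assumes "y \<in> component S R x" "z \<in> S" "R y z"
  shows "z \<in> component S R x"
  using assms unfolding component_def reach_in_def by (auto intro: rtrancl_into_rtrancl)

lemma component_eq:
  assumes "symp R" "z \<in> component S R x" "z \<in> component S R y"
  shows "component S R x = component S R y"
proof -
  have "sym (reach_in S R)"
    unfolding reach_in_def using \<open>symp R\<close> by (intro sym_rtrancl symI) (auto dest: sympD)
  moreover have "(x, z) \<in> reach_in S R" "(y, z) \<in> reach_in S R"
    using assms(2,3) unfolding component_def by auto
  ultimately have "(x, y) \<in> reach_in S R" "(y, x) \<in> reach_in S R"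
    unfolding reach_in_def by (meson rtrancl_trans symD)+
  then show ?thesis
    unfolding component_def reach_in_def by (auto intro: rtrancl_trans)
qed

lemma co_components_disjoint:
  assumes "C \<in> co_components V E" "D \<in> co_components V E" "C \<noteq> D"
  shows "C \<inter> D = {}"
proof -
  have "symp (coadj E)"
    unfolding coadj_def by (auto intro: sympI simp: insert_commute)
  moreover obtain x y where "C = component V (coadj E) x" "D = component V (coadj E) y"
    using assms(1,2) unfolding co_components_def by blast
  ultimately show ?thesis
    using component_eq[of "coadj E" _ V x y] \<open>C \<noteq> D\<close> by blast
qed

lemma co_component_adj:
  assumes "C \<in> co_components V E" "y \<in> C" "z \<in> V - C"
  shows "{y, z} \<in> E"
proof (rule ccontr)
  assume "{y, z} \<notin> E"
  moreover obtain x where "C = component V (coadj E) x"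
    using assms(1) unfolding co_components_def by blast
  ultimately have "z \<in> C"
    using assms(2,3) component_step[of y V "coadj E" x z] unfolding coadj_def by auto
  with assms(3) show False
    by blast
qed

text \<open>For a transition \<open>t = {{a, b}, {b, c}}\<close> of a simple graph, \<open>\<Union>t - \<Inter>t = {a, c}\<close> are its ends.\<close>

lemma transition_ends_nonempty:
  assumes "t \<in> transitions E"
  shows "\<Union>t - \<Inter>t \<noteq> {}"
proof -
  obtain a b c where t: "t = {{a, b}, {b, c}}" "a \<noteq> c"
    using assms unfolding transitions_def by blast
  then have "a \<notin> \<Inter>t \<or> c \<notin> \<Inter>t"
    by auto
  moreover have "a \<in> \<Union>t" "c \<in> \<Union>t"
    using t(1) by auto
  ultimately show ?thesis
    by blast
qed

lemma transitions_disjoint: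
  assumes "T1 \<subseteq> transitions E" "\<forall>t\<in>T1. \<Union>t - \<Inter>t \<subseteq> C" "\<forall>t\<in>T2. \<Union>t - \<Inter>t \<subseteq> D"
    "C \<inter> D = {}"
  shows "T1 \<inter> T2 = {}"
proof -
  have "\<Union>t - \<Inter>t = {}" if "t \<in> T1" "t \<in> T2" for t
    using that assms(2-4) by blast
  then show ?thesis
    using assms(1) transition_ends_nonempty by (meson disjoint_iff subsetD)
qed

definition nontrivial_co_components :: "'a set \<Rightarrow> 'a set set \<Rightarrow> 'a set set" where
  "nontrivial_co_components V E = {C \<in> co_components V E. 2 \<le> card C}"

definition component_connector :: "'a set \<Rightarrow> 'a set set \<Rightarrow> 'a set \<Rightarrow> 'a set set set \<Rightarrow> bool" where
  "component_connector V E C T \<longleftrightarrow> T \<subseteq> transitions E \<and> (\<forall>t\<in>T. \<Union>t - \<Inter>t \<subseteq> C) \<and> finite T \<and>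
     card T = (if connected_on C (adj E) then card C - 2 else card C - 1) \<and> (\<exists>h. hub E T h C V)"

lemma exists_component_connector:
  assumes "finite V" "connected_on V (adj E)" "C \<in> nontrivial_co_components V E"
  shows "\<exists>T. component_connector V E C T"
proof -
  have C: "C \<in> co_components V E" "2 \<le> card C"
    using assms(3) unfolding nontrivial_co_components_def by auto
  have "C \<subseteq> V"
    using C(1) component_subset unfolding co_components_def by fast
  then have "finite C"
    using \<open>finite V\<close> by (rule finite_subset)
  show ?thesis
  proof (cases "connected_on C (adj E)")
    case True
    then obtain T h where T: "T \<subseteq> transitions E" "\<Union>(\<Union>T) \<subseteq> C" "finite T" "card T = card C - 2"
      "hub E T h C C"
      using connected_hub_transitions[OF True \<open>finite C\<close> C(2)] by blast
    have "\<forall>t\<in>T. \<Union>t - \<Inter>t \<subseteq> C"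
      using T(2) by (meson Diff_subset Sup_upper Sup_subset_mono order_trans)
    moreover have "hub E T h C V"
      using hub_mono[OF T(5) order_refl \<open>C \<subseteq> V\<close>] .
    moreover have "card T = (if connected_on C (adj E) then card C - 2 else card C - 1)"
      using T(4) True by simp
    ultimately show ?thesis
      using T(1,3) unfolding component_connector_def by blast
  next
    case False
    with \<open>connected_on V (adj E)\<close> have "C \<noteq> V"
      by metis
    with \<open>C \<subseteq> V\<close> obtain x where x: "x \<in> V" "x \<notin> C"
      by blast
    obtain c where "c \<in> C"
      using C(2) by (metis card.empty ex_in_conv not_numeral_le_zero)
    have "{x, y} \<in> E" if "y \<in> C" for y
      using co_component_adj[OF C(1) that] x doubleton_eq_iff[of x y y x] by auto
    with \<open>finite C\<close> \<open>c \<in> C\<close> \<open>x \<notin> C\<close> obtain T where T: "T \<subseteq> transitions E"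
      "\<forall>t\<in>T. \<Union>t - \<Inter>t \<subseteq> C" "finite T" "card T = card C - 1" "hub E T (x, c) C {x}"
      using star_hub_transitions by metis
    have "hub E T (x, c) C V"
      using hub_mono[OF T(5) order_refl] x(1) by simp
    moreover have "card T = (if connected_on C (adj E) then card C - 2 else card C - 1)"
      using T(4) False by simp
    ultimately show ?thesis
      using T(1-3) unfolding component_connector_def by blast
  qed
qed

lemma T_connectedI:
  assumes "\<And>u v. u \<in> V \<Longrightarrow> v \<in> V \<Longrightarrow> coadj E u v \<Longrightarrow>
    \<exists>w. is_walk E w \<and> T_compatible T w \<and> hd w = u \<and> last w = v"
  shows "T_connected V E T"
  unfolding T_connected_def
proof (intro ballI)
  fix u v assume "u \<in> V" "v \<in> V"
  consider "u = v" | "{u, v} \<in> E" | "coadj E u v"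
    unfolding coadj_def by blast
  then show "\<exists>w. is_walk E w \<and> T_compatible T w \<and> hd w = u \<and> last w = v"
  proof cases
    case 1
    then show ?thesis
      by (intro exI[of _ "[u]"]) (simp add: is_walk_def T_compatible_def)
  next
    case 2
    then show ?thesis
      by (intro exI[of _ "[u, v]"]) (simp add: is_walk_def T_compatible_def less_Suc_eq)
  next
    case 3
    with \<open>u \<in> V\<close> \<open>v \<in> V\<close> show ?thesis
      by (rule assms)
  qed
qed

lemma co_component_of_nonadjacent:
  assumes "finite V" "u \<in> V" "v \<in> V" "coadj E u v"
  shows "component V (coadj E) u \<in> nontrivial_co_components V E"
    and "u \<in> component V (coadj E) u" "v \<in> component V (coadj E) u"
proof -
  show u: "u \<in> component V (coadj E) u"
    using \<open>u \<in> V\<close> by (rule component_refl)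
  show v: "v \<in> component V (coadj E) u"
    using u \<open>v \<in> V\<close> \<open>coadj E u v\<close> by (rule component_step)
  have "u \<noteq> v"
    using \<open>coadj E u v\<close> unfolding coadj_def by simp
  then have "card {u, v} \<le> card (component V (coadj E) u)"
    using u v \<open>finite V\<close> component_subset by (metis card_mono empty_subsetI finite_subset insert_subset)
  then show "component V (coadj E) u \<in> nontrivial_co_components V E"
    using \<open>u \<noteq> v\<close> \<open>u \<in> V\<close> unfolding nontrivial_co_components_def co_components_def by simp
qed

lemma card_Union_component_connectors:
  assumes "finite V" and g: "\<And>C. C \<in> nontrivial_co_components V E \<Longrightarrow> component_connector V E C (g C)"
  shows "card (\<Union>(g ` nontrivial_co_components V E)) = tau V E"
proof -
  let ?F = "nontrivial_co_components V E"
  have "finite ?F"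
    unfolding nontrivial_co_components_def co_components_def using \<open>finite V\<close> by simp
  have "g C \<inter> g D = {}" if "C \<in> ?F" "D \<in> ?F" "C \<noteq> D" for C D
  proof -
    have "C \<inter> D = {}"
      using that co_components_disjoint unfolding nontrivial_co_components_def by blast
    with g[OF \<open>C \<in> ?F\<close>] g[OF \<open>D \<in> ?F\<close>] show ?thesis
      unfolding component_connector_def using transitions_disjoint[of "g C" E C "g D" D] by blast
  qed
  moreover have "finite (g C)" if "C \<in> ?F" for C
    using g[OF that] unfolding component_connector_def by blast
  ultimately have "card (\<Union>(g ` ?F)) = (\<Sum>C\<in>?F. card (g C))"
    using \<open>finite ?F\<close> by (intro card_UN_disjoint) auto
  also have "\<dots> = tau V E"
    unfolding tau_def nontrivial_co_components_def[symmetric] using g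
    unfolding component_connector_def by (intro sum.cong) simp_all
  finally show ?thesis .
qed

lemma T_connected_Union_component_connectors:
  assumes "finite V" and g: "\<And>C. C \<in> nontrivial_co_components V E \<Longrightarrow> component_connector V E C (g C)"
  shows "T_connected V E (\<Union>(g ` nontrivial_co_components V E))"
proof (rule T_connectedI)
  fix u v assume "u \<in> V" "v \<in> V" "coadj E u v"
  note C = co_component_of_nonadjacent[OF \<open>finite V\<close> this]
  then obtain h where "hub E (g (component V (coadj E) u)) h (component V (coadj E) u) V"
    using g unfolding component_connector_def by blast
  then have "hub E (\<Union>(g ` nontrivial_co_components V E)) h (component V (coadj E) u) V"
    by (rule hub_mono) (use C(1) in auto)
  then show "\<exists>w. is_walk E w \<and> T_compatible (\<Union>(g ` nontrivial_co_components V E)) w \<and>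
      hd w = u \<and> last w = v"
    using C(2,3) by (rule hub_walk)
qed

theorem theorem3:
  fixes V :: "'a set" and E :: "'a set set"
  assumes "simple_graph V E"
    and "connected_on V (adj E)"
    and "card V \<ge> 2"
  shows "\<exists>T. connecting_transition_set V E T \<and> card T = tau V E"
proof -
  have "finite V"
    using assms(1) unfolding simple_graph_def by blast
  have "\<forall>C\<in>nontrivial_co_components V E. \<exists>T. component_connector V E C T"
    using exists_component_connector[OF \<open>finite V\<close> assms(2)] by blast
  then obtain g where g: "\<And>C. C \<in> nontrivial_co_components V E \<Longrightarrow> component_connector V E C (g C)"
    by (rule bchoice[elim_format]) blast
  let ?T = "\<Union>(g ` nontrivial_co_components V E)"
  have "?T \<subseteq> transitions E"
    using g unfolding component_connector_def by blast
  moreover have "T_connected V E ?T"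
    using \<open>finite V\<close> g by (rule T_connected_Union_component_connectors)
  moreover have "card ?T = tau V E"
    using \<open>finite V\<close> g by (rule card_Union_component_connectors)
  ultimately show ?thesis
    unfolding connecting_transition_set_def by blast
qed

end
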